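(* (i) Let $K = K(L)$ be positive integers with $\lim_{L\to\infty} K/L = \kappa > 0$. Then $$\lim_{L\to\infty} \frac{1}{L} H(\mathsf{BF}(L,K)) = h_2(e^{-\kappa}).$$ (ii) Let $K_1 = K_1(L)$, $K_2 = K_2(L)$ be positive integers with $\lim_{L\to\infty} K_i/L = \kappa_i > 0$, $i=1,2$. Let $\underline{x}_1 \sim \mathsf{BF}(L,K_1)$ and $\underline{x}_2 \sim \mathsf{BF}(L,K_2)$ be independent. Then $$\lim_{L\to\infty} \frac{1}{L} H(\underline{x}_1 \vee \underline{x}_2 \mid \underline{x}_1) = e^{-\kappa_1} h_2(e^{-\kappa_2}),$$ where $\vee$ denotes componentwise Boolean OR.
   Context: A Bloom filter $\mathsf{BF}(L, K)$ is the random binary array in $\{0,1\}^L$ obtained by starting from the all-zero array and letting $K$ hash functions each independently select a uniformly random position in $\{1,\dots,L\}$ and set it to $1$ (positions may be selected repeatedly). $H$ denotes Shannon entropy and $h_2(x) = -x\log x - (1-x)\log(1-x)$ is the binary entropy function, with logarithms in the same base as in $H$. *)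

theory Defs
  imports "HOL-Probability.Probability"
begin

text \<open>Bloom filter BF(L,K): positions are 0..L-1; the array is represented by the set
  of positions holding a 1 (position i has bit 1 iff i is in the set).
  Each of the K hash functions independently picks a uniform position and sets it.\<close>
fun bloom_filter :: "nat \<Rightarrow> nat \<Rightarrow> nat set pmf" where
  "bloom_filter L 0 = return_pmf {}"
| "bloom_filter L (Suc k) =
     bind_pmf (bloom_filter L k) (\<lambda>S. map_pmf (\<lambda>i. insert i S) (pmf_of_set {..<L}))"

definition shannon_entropy :: "real \<Rightarrow> 'a pmf \<Rightarrow> real" where
  "shannon_entropy b p = - (\<Sum>x\<in>set_pmf p. pmf p x * log b (pmf p x))"

definition cond_entropy :: "real \<Rightarrow> ('a \<times> 'c) pmf \<Rightarrow> real" where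
  "cond_entropy b p = shannon_entropy b p - shannon_entropy b (map_pmf fst p)"

definition h2 :: "real \<Rightarrow> real \<Rightarrow> real" where
  "h2 b x = - x * log b x - (1 - x) * log b (1 - x)"

end

theory Submission
  imports Defs "HOL-Real_Asymp.Real_Asymp"
begin

text \<open>
  A fixed position of \<open>BF(L, k)\<close> is still 0 with probability \<open>q = (1 - 1/L)^k \<rightarrow> e^{-\<kappa>}\<close>, so
  the number \<open>W\<close> of zeros among any \<open>z\<close> positions has mean \<open>z q\<close>, and distinct positions are
  negatively correlated, whence \<open>Var W \<le> z\<close>. Gibbs' inequality against independent
  Bernoulli bits with the same marginal only sees \<open>E W\<close> and gives \<open>H \<le> z h\<^sub>2(q)\<close>. Conversely
  the law is invariant under permutations of the positions, so every configuration with \<open>w\<close>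
  zeros has probability at most \<open>1 / C(z, w)\<close> and \<open>H \<ge> E log C(z, W)\<close>; comparing
  \<open>C(z, w)\<close> with the binomial distribution at its mode gives
  \<open>log C(z, w) \<ge> z h\<^sub>2(q) - log (z + 1) - O((w - z q)\<^sup>2 / z)\<close>, and the variance bound makes
  the error \<open>O(log L)\<close>. For (ii), given \<open>x\<^sub>1\<close> the union is determined by \<open>x\<^sub>2\<close> restricted to
  the zeros of \<open>x\<^sub>1\<close>, whose expected number is \<open>L q\<^sub>1\<close>.
\<close>

section \<open>Entropy of finite distributions\<close>

lemma shannon_entropy_eq_sum:
  assumes "finite A" "set_pmf p \<subseteq> A"
  shows "shannon_entropy b p = - (\<Sum>x\<in>A. pmf p x * log b (pmf p x))"
  unfolding shannon_entropy_def
  using assms by (intro arg_cong[where f=uminus] sum.mono_neutral_left) (auto simp: set_pmf_eq)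

lemma shannon_entropy_eq_expectation:
  assumes "finite (set_pmf p)"
  shows "shannon_entropy b p = measure_pmf.expectation p (\<lambda>x. - log b (pmf p x))"
  unfolding shannon_entropy_def using assms
  by (subst integral_measure_pmf_real[of "set_pmf p"]) (auto simp: sum_negf mult.commute)

lemma shannon_entropy_map_pmf_inj:
  assumes "inj_on f (set_pmf p)"
  shows "shannon_entropy b (map_pmf f p) = shannon_entropy b p"
  unfolding shannon_entropy_def set_map_pmf
  using assms by (subst sum.reindex) (auto simp: pmf_map_inj)

lemma shannon_entropy_le_cross_entropy:
  assumes "b > 1" "finite A" "set_pmf p \<subseteq> A"
    and "\<And>x. x \<in> A \<Longrightarrow> r x > 0" "(\<Sum>x\<in>A. r x) \<le> 1"
  shows "shannon_entropy b p \<le> measure_pmf.expectation p (\<lambda>x. - log b (r x))"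
proof -
  have lnb: "ln b > 0" using assms(1) by simp
  have "pmf p x * (log b (r x) - log b (pmf p x)) \<le> (r x - pmf p x) / ln b" if "x \<in> A" for x
  proof (cases "pmf p x = 0")
    case True
    then show ?thesis using assms(4)[OF that] lnb by simp
  next
    case False
    then have p: "pmf p x > 0" by (simp add: order_le_neq_trans)
    have "log b (r x) - log b (pmf p x) = ln (r x / pmf p x) / ln b"
      using p assms(4)[OF that] by (simp add: log_def ln_div diff_divide_distrib)
    also have "\<dots> \<le> (r x / pmf p x - 1) / ln b"
      using ln_le_minus_one[of "r x / pmf p x"] p assms(4)[OF that] lnb by (intro divide_right_mono) auto
    finally have "pmf p x * (log b (r x) - log b (pmf p x)) \<le> pmf p x * ((r x / pmf p x - 1) / ln b)"
      by (rule mult_left_mono) simp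
    also have "\<dots> = (r x - pmf p x) / ln b" using p by (simp add: diff_divide_distrib right_diff_distrib)
    finally show ?thesis .
  qed
  then have "(\<Sum>x\<in>A. pmf p x * (log b (r x) - log b (pmf p x))) \<le> (\<Sum>x\<in>A. (r x - pmf p x) / ln b)"
    by (intro sum_mono)
  also have "\<dots> = ((\<Sum>x\<in>A. r x) - (\<Sum>x\<in>A. pmf p x)) / ln b"
    by (simp add: sum_divide_distrib[symmetric] sum_subtractf)
  also have "\<dots> \<le> 0" using sum_pmf_eq_1[OF assms(2,3)] assms(5) lnb by (simp add: divide_nonpos_pos)
  finally have "- (\<Sum>x\<in>A. pmf p x * log b (pmf p x)) \<le> (\<Sum>x\<in>A. - log b (r x) * pmf p x)"
    by (simp add: algebra_simps sum_subtractf sum_negf)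
  then show ?thesis
    using assms(2,3) by (subst integral_measure_pmf_real[of A]) (auto simp: shannon_entropy_eq_sum)
qed

lemma shannon_entropy_ge_exchangeable:
  assumes "b > 1" "finite Z" "set_pmf Y \<subseteq> Pow Z"
    and exchangeable: "\<And>T T'. T \<subseteq> Z \<Longrightarrow> T' \<subseteq> Z \<Longrightarrow> card T = card T' \<Longrightarrow> pmf Y T = pmf Y T'"
  shows "measure_pmf.expectation Y (\<lambda>T. log b (card Z choose card T)) \<le> shannon_entropy b Y"
proof -
  have "log b (card Z choose card T) \<le> - log b (pmf Y T)" if T: "T \<in> set_pmf Y" for T
  proof -
    have TZ: "T \<subseteq> Z" and p: "pmf Y T > 0" using T assms(3) by (auto simp: pmf_positive)
    then have "card T \<le> card Z" using assms(2) by (simp add: card_mono)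
    define same_card where "same_card = {T'. T' \<subseteq> Z \<and> card T' = card T}"
    have "(\<Sum>T'\<in>same_card. pmf Y T') = (\<Sum>T'\<in>same_card. pmf Y T)"
      using TZ by (intro sum.cong refl exchangeable) (auto simp: same_card_def)
    then have "real (card Z choose card T) * pmf Y T = (\<Sum>T'\<in>same_card. pmf Y T')"
      using n_subsets[OF assms(2), of "card T"] by (simp add: same_card_def)
    also have "\<dots> \<le> (\<Sum>T'\<in>Pow Z. pmf Y T')"
      using assms(2) by (intro sum_mono2) (auto simp: same_card_def)
    also have "\<dots> = 1" using sum_pmf_eq_1[of "Pow Z" Y] assms(2,3) by simp
    finally have "log b (real (card Z choose card T) * pmf Y T) \<le> 0"
      using assms(1) p \<open>card T \<le> card Z\<close> by (subst log_le_zero_cancel_iff) auto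
    then show ?thesis
      using assms(1) p \<open>card T \<le> card Z\<close> by (simp add: log_mult)
  qed
  moreover have "finite (set_pmf Y)" using assms(2,3) finite_subset by blast
  ultimately have "measure_pmf.expectation Y (\<lambda>T. log b (card Z choose card T))
      \<le> measure_pmf.expectation Y (\<lambda>T. - log b (pmf Y T))"
    by (intro integral_mono_AE integrable_measure_pmf_finite) (auto simp: AE_measure_pmf_iff)
  with \<open>finite (set_pmf Y)\<close> show ?thesis by (simp only: shannon_entropy_eq_expectation)
qed

lemma pmf_map_pair_pmf_dependent:
  "pmf (map_pmf (\<lambda>(x, y). (x, f x y)) (pair_pmf P Q)) (a, c) = pmf P a * pmf (map_pmf (f a) Q) c"
proof -
  have preimage: "(\<lambda>(x, y). (x, f x y)) -` {(a, c)} \<inter> set_pmf (pair_pmf P Q)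
      = ({a} \<inter> set_pmf P) \<times> (f a -` {c} \<inter> set_pmf Q)"
    by auto
  have "pmf (map_pmf (\<lambda>(x, y). (x, f x y)) (pair_pmf P Q)) (a, c)
      = measure (pair_pmf P Q) ((\<lambda>(x, y). (x, f x y)) -` {(a, c)} \<inter> set_pmf (pair_pmf P Q))"
    unfolding pmf_map by (rule measure_Int_set_pmf[symmetric])
  also have "\<dots> = measure P ({a} \<inter> set_pmf P) * measure Q (f a -` {c} \<inter> set_pmf Q)"
    unfolding preimage by (intro measure_pmf_prob_product countable_Int2 countable_set_pmf)
  also have "\<dots> = pmf P a * pmf (map_pmf (f a) Q) c"
    by (simp only: measure_Int_set_pmf measure_pmf_single pmf_map)
  finally show ?thesis .
qed

lemma cond_entropy_map_pair_pmf:
  assumes "b > 1" "finite (set_pmf P)" "finite (set_pmf Q)"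
  shows "cond_entropy b (map_pmf (\<lambda>(x, y). (x, f x y)) (pair_pmf P Q)) =
    measure_pmf.expectation P (\<lambda>x. shannon_entropy b (map_pmf (f x) Q))"
proof -
  define J where "J = map_pmf (\<lambda>(x, y). (x, f x y)) (pair_pmf P Q)"
  define Y where "Y x = map_pmf (f x) Q" for x
  have finY: "finite (set_pmf (Y x))" for x unfolding Y_def using assms(3) by simp
  have supp: "set_pmf J \<subseteq> Sigma (set_pmf P) (\<lambda>a. set_pmf (Y a))"
    by (auto simp: J_def Y_def)
  have J: "pmf J (a, c) = pmf P a * pmf (Y a) c" for a c
    unfolding J_def Y_def by (rule pmf_map_pair_pmf_dependent)
  have "shannon_entropy b J = - (\<Sum>a\<in>set_pmf P. \<Sum>c\<in>set_pmf (Y a). pmf J (a, c) * log b (pmf J (a, c)))"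
    using assms(2) finY supp
    by (simp add: shannon_entropy_eq_sum[of "Sigma (set_pmf P) (\<lambda>a. set_pmf (Y a))"] sum.Sigma)
  also have "\<dots> = - (\<Sum>a\<in>set_pmf P. \<Sum>c\<in>set_pmf (Y a).
      pmf (Y a) c * (pmf P a * log b (pmf P a)) + pmf P a * (pmf (Y a) c * log b (pmf (Y a) c)))"
    using assms(1) by (intro arg_cong[where f=uminus] sum.cong refl) (simp add: J log_mult pmf_positive algebra_simps)
  also have "\<dots> = shannon_entropy b P + (\<Sum>a\<in>set_pmf P. pmf P a * shannon_entropy b (Y a))"
    using finY
    by (simp add: sum.distrib sum_distrib_left[symmetric] sum_distrib_right[symmetric]
        sum_pmf_eq_1 shannon_entropy_def sum_negf)
  finally have "shannon_entropy b J = shannon_entropy b P + (\<Sum>a\<in>set_pmf P. pmf P a * shannon_entropy b (Y a))" .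
  moreover have "map_pmf fst J = P"
    unfolding J_def pmf.map_comp by (simp add: o_def case_prod_unfold map_fst_pair_pmf)
  ultimately show ?thesis
    unfolding cond_entropy_def J_def[symmetric] Y_def
    using assms(2) by (simp add: integral_measure_pmf_real[of "set_pmf P"] mult.commute)
qed

section \<open>Binomial coefficients\<close>

lemma binomial_pmf_Suc_ratio:
  assumes "k < n" "0 \<le> p" "p \<le> 1"
  shows "pmf (binomial_pmf n p) (Suc k) * (real (Suc k) * (1 - p))
       = pmf (binomial_pmf n p) k * (real (n - k) * p)"
proof -
  have choose: "(n choose Suc k) * Suc k = (n choose k) * (n - k)"
    using binomial_absorb_comp[of n k] binomial_absorption[of k n] by (simp add: mult.commute)
  have "n - k = Suc (n - Suc k)" using assms(1) by simp
  then have "pmf (binomial_pmf n p) (Suc k) * (real (Suc k) * (1 - p))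
      = real ((n choose Suc k) * Suc k) * p ^ Suc k * (1 - p) ^ (n - k)"
    using assms by (simp add: algebra_simps)
  also have "\<dots> = pmf (binomial_pmf n p) k * (real (n - k) * p)"
    unfolding choose using assms by (simp add: mult_ac)
  finally show ?thesis .
qed

lemma binomial_pmf_mono_below_mode:
  fixes n z j :: nat
  assumes "j < n" "n \<le> z"
  defines "x \<equiv> real n / real z"
  shows "pmf (binomial_pmf z x) j \<le> pmf (binomial_pmf z x) (Suc j)"
proof -
  have "j < z" "0 < real z" "0 < x" "x \<le> 1" using assms by (auto simp: x_def divide_le_eq_1)
  have scaled: "real (Suc j) * (1 - x) * real z = real (Suc j) * (real z - real n)"
    "real (z - j) * x * real z = (real z - real j) * real n"
    using \<open>j < z\<close> by (auto simp: x_def field_simps of_nat_diff)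
  have "real (Suc j) * (1 - x) * real z \<le> real (z - j) * x * real z"
    unfolding scaled using assms mult_left_mono[of "real (Suc j)" "real n" "real z"]
    by (simp add: algebra_simps)
  then have le: "real (Suc j) * (1 - x) \<le> real (z - j) * x"
    using \<open>0 < real z\<close> by (simp add: mult_le_cancel_right_pos)
  have pos: "0 < real (z - j) * x" using \<open>j < z\<close> \<open>0 < x\<close> by simp
  have "pmf (binomial_pmf z x) j * (real (z - j) * x)
      = pmf (binomial_pmf z x) (Suc j) * (real (Suc j) * (1 - x))"
    using binomial_pmf_Suc_ratio[OF \<open>j < z\<close> less_imp_le[OF \<open>0 < x\<close>] \<open>x \<le> 1\<close>] by simp
  also have "\<dots> \<le> pmf (binomial_pmf z x) (Suc j) * (real (z - j) * x)"
    using le by (intro mult_left_mono) simp_all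
  finally show ?thesis using mult_le_cancel_right_pos[OF pos] by blast
qed

lemma binomial_pmf_antimono_above_mode:
  fixes n z j :: nat
  assumes "n \<le> j" "j < z"
  defines "x \<equiv> real n / real z"
  shows "pmf (binomial_pmf z x) (Suc j) \<le> pmf (binomial_pmf z x) j"
proof -
  have "0 < real z" "0 \<le> x" "x < 1" using assms by (auto simp: x_def)
  have scaled: "real (z - j) * x * real z = (real z - real j) * real n"
    "real (Suc j) * (1 - x) * real z = real (Suc j) * (real z - real n)"
    using assms by (auto simp: x_def field_simps of_nat_diff)
  have "real n * real z \<le> real j * real z" using assms by (intro mult_right_mono) auto
  then have "real n + real n * real z \<le> real z + real j * real z" using assms by linarith
  then have "real (z - j) * x * real z \<le> real (Suc j) * (1 - x) * real z"
    unfolding scaled by (simp add: algebra_simps)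
  then have le: "real (z - j) * x \<le> real (Suc j) * (1 - x)"
    using \<open>0 < real z\<close> by (simp add: mult_le_cancel_right_pos)
  have pos: "0 < real (Suc j) * (1 - x)" using \<open>x < 1\<close> by simp
  have "pmf (binomial_pmf z x) (Suc j) * (real (Suc j) * (1 - x))
      = pmf (binomial_pmf z x) j * (real (z - j) * x)"
    using binomial_pmf_Suc_ratio[OF assms(2) \<open>0 \<le> x\<close> less_imp_le[OF \<open>x < 1\<close>]] .
  also have "\<dots> \<le> pmf (binomial_pmf z x) j * (real (Suc j) * (1 - x))"
    using le by (intro mult_left_mono) simp_all
  finally show ?thesis using mult_le_cancel_right_pos[OF pos] by blast
qed

lemma binomial_pmf_le_mode:
  fixes n z k :: nat
  assumes "n \<le> z" "k \<le> z"
  defines "x \<equiv> real n / real z"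
  shows "pmf (binomial_pmf z x) k \<le> pmf (binomial_pmf z x) n"
proof -
  define t where "t = pmf (binomial_pmf z x)"
  have "t j \<le> t m" if "j \<le> m" "m \<le> n" for j m
    using that
  proof (induction m rule: dec_induct)
    case (step m)
    then have "t j \<le> t m" by simp
    also have "\<dots> \<le> t (Suc m)"
      using binomial_pmf_mono_below_mode[of m n z] step assms(1) by (simp add: t_def x_def)
    finally show ?case .
  qed simp
  moreover have "t m \<le> t n" if "n \<le> m" "m \<le> z" for m
    using that
  proof (induction m rule: dec_induct)
    case (step m)
    then have "t (Suc m) \<le> t m"
      using binomial_pmf_antimono_above_mode[of n m z] by (simp add: t_def x_def)
    also have "\<dots> \<le> t n" using step by simp
    finally show ?case .
  qed simp
  ultimately show ?thesis
    using assms(2) unfolding t_def by (cases "k \<le> n") auto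
qed

lemma binomial_pmf_mode_ge:
  fixes n z :: nat
  assumes "n \<le> z"
  defines "x \<equiv> real n / real z"
  shows "1 \<le> (real z + 1) * pmf (binomial_pmf z x) n"
proof -
  have "0 \<le> x" "x \<le> 1" unfolding x_def using assms by (auto simp: divide_le_eq_1)
  then have "1 = (\<Sum>k\<le>z. pmf (binomial_pmf z x) k)"
    by (intro sum_pmf_eq_1[symmetric]) (auto simp: set_pmf_binomial_eq)
  also have "\<dots> \<le> (\<Sum>k\<le>z. pmf (binomial_pmf z x) n)"
    unfolding x_def using assms by (intro sum_mono binomial_pmf_le_mode) auto
  finally show ?thesis by (simp add: add.commute)
qed

lemma power_mult_power_le_exp:
  fixes x m :: real
  assumes "0 \<le> x" "x \<le> 1" "0 < m" "m < 1"
  shows "x ^ n * (1 - x) ^ l \<le> m ^ n * (1 - m) ^ l * exp (n * (x / m - 1) + l * ((1 - x) / (1 - m) - 1))"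
proof -
  have "(x / m) ^ n \<le> exp (x / m - 1) ^ n" "((1 - x) / (1 - m)) ^ l \<le> exp ((1 - x) / (1 - m) - 1) ^ l"
    using assms exp_ge_add_one_self[of "x / m - 1"] exp_ge_add_one_self[of "(1 - x) / (1 - m) - 1"]
    by (intro power_mono; simp)+
  then have "(x / m) ^ n * ((1 - x) / (1 - m)) ^ l \<le> exp (n * (x / m - 1) + l * ((1 - x) / (1 - m) - 1))"
    using assms by (simp add: exp_add exp_of_nat_mult[symmetric] mult_mono)
  then show ?thesis using assms by (simp add: power_divide field_simps)
qed

lemma chi_square_binomial:
  fixes n z :: nat and m :: real
  assumes "n \<le> z" "0 < m" "m < 1"
  defines "x \<equiv> real n / real z"
  shows "n * (x / m - 1) + (real z - n) * ((1 - x) / (1 - m) - 1) = (n - z * m)\<^sup>2 / (z * m * (1 - m))"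
  using assms by (cases "z = 0") (auto simp: x_def field_simps power2_eq_square)

lemma log_binomial_ge:
  fixes n z :: nat and m b :: real
  assumes "b > 1" "n \<le> z" "0 < m" "m < 1"
  shows "- log b (real z + 1) - n * log b m - (real z - n) * log b (1 - m)
      - (n - z * m)\<^sup>2 / (z * m * (1 - m) * ln b) \<le> log b (z choose n)"
proof -
  define x where "x = real n / real z"
  define chi where "chi = (n - z * m)\<^sup>2 / (z * m * (1 - m))"
  have x: "0 \<le> x" "x \<le> 1" unfolding x_def using assms by (auto simp: divide_le_eq_1)
  have "1 \<le> (real z + 1) * pmf (binomial_pmf z x) n"
    unfolding x_def using assms(2) by (rule binomial_pmf_mode_ge)
  also have "\<dots> \<le> (real z + 1) * ((z choose n) * (m ^ n * (1 - m) ^ (z - n) * exp chi))"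
    using power_mult_power_le_exp[OF x assms(3,4), of n "z - n"]
      chi_square_binomial[OF assms(2-4)] assms(2) x
    by (intro mult_left_mono) (simp_all add: x_def chi_def of_nat_diff mult.assoc)
  finally have "0 \<le> log b ((real z + 1) * ((z choose n) * (m ^ n * (1 - m) ^ (z - n) * exp chi)))"
    using assms by simp
  also have "\<dots> = log b (real z + 1) + log b (z choose n) + n * log b m + (real z - n) * log b (1 - m)
      + chi / ln b"
    using assms by (simp add: log_mult log_nat_power of_nat_diff)
  finally show ?thesis unfolding chi_def by (simp add: algebra_simps)
qed

section \<open>Zeros of a Bloom filter\<close>

lemma set_pmf_bloom_filter: "L > 0 \<Longrightarrow> set_pmf (bloom_filter L k) \<subseteq> Pow {..<L}"
  by (induction k) (auto simp: set_pmf_of_set lessThan_empty_iff)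

lemma finite_set_pmf_bloom_filter: "L > 0 \<Longrightarrow> finite (set_pmf (bloom_filter L k))"
  using set_pmf_bloom_filter by (meson finite_Pow_iff finite_lessThan finite_subset)

lemma expectation_bloom_filter_Suc:
  fixes g :: "nat set \<Rightarrow> real"
  assumes "L > 0"
  shows "measure_pmf.expectation (bloom_filter L (Suc k)) g =
    measure_pmf.expectation (bloom_filter L k) (\<lambda>S. (\<Sum>i<L. g (insert i S)) / L)"
  using assms finite_set_pmf_bloom_filter[OF assms, of k]
  by (simp add: pmf_expectation_bind[of "set_pmf (bloom_filter L k)"] integral_pmf_of_set
      lessThan_empty_iff integral_measure_pmf_real[of "set_pmf (bloom_filter L k)"] mult.commute
      sum_divide_distrib)

lemma expectation_bloom_filter_disjoint:
  assumes "L > 0" "A \<subseteq> {..<L}"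
  shows "measure_pmf.expectation (bloom_filter L k) (\<lambda>S. of_bool (S \<inter> A = {})) = (1 - card A / L) ^ k"
proof (induction k)
  case (Suc k)
  have "card ({..<L} - A) = L - card A"
    using assms(2) by (simp add: card_Diff_subset finite_subset)
  then have step: "(\<Sum>i<L. of_bool (insert i S \<inter> A = {}) :: real) / L
      = of_bool (S \<inter> A = {}) * (1 - card A / L)" for S
    using assms card_mono[OF _ assms(2)]
    by (auto simp: Int_commute Diff_eq Compl_eq of_nat_diff field_simps)
  show ?case
    unfolding expectation_bloom_filter_Suc[OF assms(1)] step integral_mult_left_zero Suc by simp
qed simp

definition zero_prob :: "nat \<Rightarrow> nat \<Rightarrow> real" where
  "zero_prob L k = (1 - 1 / real L) ^ k"

lemma zero_prob_bounds:
  assumes "L \<ge> 2" "k \<ge> 1"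
  shows "0 < zero_prob L k" "zero_prob L k < 1"
  using assms by (auto simp: zero_prob_def power_less_one_iff)

lemma card_Diff_eq_sum_of_bool:
  "finite Z \<Longrightarrow> real (card (Z - S)) = (\<Sum>i\<in>Z. of_bool (S \<inter> {i} = {}))"
  by (simp add: Diff_eq Compl_eq Int_commute)

lemma expectation_card_zeros:
  assumes "L > 0" "Z \<subseteq> {..<L}"
  shows "measure_pmf.expectation (bloom_filter L k) (\<lambda>S. real (card (Z - S))) = card Z * zero_prob L k"
proof -
  have "finite Z" using assms(2) finite_subset by blast
  then have "measure_pmf.expectation (bloom_filter L k) (\<lambda>S. real (card (Z - S)))
      = (\<Sum>i\<in>Z. measure_pmf.expectation (bloom_filter L k) (\<lambda>S. of_bool (S \<inter> {i} = {})))"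
    unfolding card_Diff_eq_sum_of_bool[OF \<open>finite Z\<close>]
    by (intro Bochner_Integration.integral_sum integrable_measure_pmf_finite
        finite_set_pmf_bloom_filter assms(1))
  also have "\<dots> = (\<Sum>i\<in>Z. zero_prob L k)"
    using assms expectation_bloom_filter_disjoint[OF assms(1), of "{_}"]
    by (intro sum.cong refl) (auto simp: zero_prob_def)
  finally show ?thesis by simp
qed

lemma expectation_affine_card_zeros:
  assumes "L > 0" "Z \<subseteq> {..<L}"
  shows "measure_pmf.expectation (bloom_filter L k) (\<lambda>S. a + c * real (card (Z - S)))
    = a + c * (card Z * zero_prob L k)"
proof -
  have "integrable (measure_pmf (bloom_filter L k)) f" for f :: "nat set \<Rightarrow> real"
    by (intro integrable_measure_pmf_finite finite_set_pmf_bloom_filter assms(1))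
  then show ?thesis
    by (simp add: Bochner_Integration.integral_add expectation_card_zeros[OF assms])
qed

lemma expectation_bloom_filter_disjoint_pair:
  assumes "L > 0" "i < L" "j < L"
  shows "measure_pmf.expectation (bloom_filter L k) (\<lambda>S. of_bool (S \<inter> {i, j} = {}))
    \<le> zero_prob L k ^ 2 + of_bool (i = j) * zero_prob L k"
proof (cases "i = j")
  case True
  then show ?thesis
    using assms expectation_bloom_filter_disjoint[OF assms(1), of "{i}"] by (simp add: zero_prob_def)
next
  case False
  then have "L \<ge> 2" using assms by linarith
  have "(1 - 2 / real L) ^ k \<le> ((1 - 1 / real L)\<^sup>2) ^ k"
    using \<open>L \<ge> 2\<close> by (intro power_mono) (auto simp: power2_eq_square field_simps)
  then show ?thesis
    using False assms expectation_bloom_filter_disjoint[OF assms(1), of "{i, j}"]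
    by (simp add: zero_prob_def power_mult[symmetric] mult.commute)
qed

lemma expectation_card_zeros_deviation_sq:
  assumes "L > 0" "Z \<subseteq> {..<L}"
  shows "measure_pmf.expectation (bloom_filter L k)
      (\<lambda>S. (real (card (Z - S)) - card Z * zero_prob L k)\<^sup>2) \<le> card Z"
proof -
  define X where "X = bloom_filter L k"
  define q where "q = zero_prob L k"
  define z where "z = real (card Z)"
  have "finite Z" using assms(2) finite_subset by blast
  have int: "integrable (measure_pmf X) f" for f :: "nat set \<Rightarrow> real"
    unfolding X_def by (intro integrable_measure_pmf_finite finite_set_pmf_bloom_filter assms(1))
  have q: "0 \<le> q" "q \<le> 1" using assms(1) by (auto simp: q_def zero_prob_def intro!: power_le_one)
  have "(real (card (Z - S)))\<^sup>2 = (\<Sum>i\<in>Z. \<Sum>j\<in>Z. of_bool (S \<inter> {i, j} = {}))" for S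
    unfolding card_Diff_eq_sum_of_bool[OF \<open>finite Z\<close>] power2_eq_square sum_product
    by (intro sum.cong refl) auto
  then have "measure_pmf.expectation X (\<lambda>S. (real (card (Z - S)))\<^sup>2)
      = (\<Sum>i\<in>Z. \<Sum>j\<in>Z. measure_pmf.expectation X (\<lambda>S. of_bool (S \<inter> {i, j} = {})))"
    by (simp add: Bochner_Integration.integral_sum int)
  also have "\<dots> \<le> (\<Sum>i\<in>Z. \<Sum>j\<in>Z. q\<^sup>2 + of_bool (i = j) * q)"
    unfolding X_def q_def using assms
    by (intro sum_mono expectation_bloom_filter_disjoint_pair) auto
  also have "\<dots> = z * z * q\<^sup>2 + z * q"
    unfolding z_def using \<open>finite Z\<close> by (simp add: sum.distrib algebra_simps)
  finally have second: "measure_pmf.expectation X (\<lambda>S. (real (card (Z - S)))\<^sup>2) \<le> z * z * q\<^sup>2 + z * q" .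
  have first: "measure_pmf.expectation X (\<lambda>S. real (card (Z - S))) = z * q"
    unfolding X_def z_def q_def by (rule expectation_card_zeros[OF assms])
  have "measure_pmf.expectation X (\<lambda>S. (real (card (Z - S)) - z * q)\<^sup>2)
      = measure_pmf.expectation X (\<lambda>S. (real (card (Z - S)))\<^sup>2)
        - 2 * (z * q) * measure_pmf.expectation X (\<lambda>S. real (card (Z - S))) + (z * q)\<^sup>2"
    by (simp add: power2_diff Bochner_Integration.integral_diff Bochner_Integration.integral_add int)
  also have "\<dots> \<le> z * q" using first second by (simp add: power2_eq_square algebra_simps)
  also have "\<dots> \<le> z" using q unfolding z_def by (simp add: mult_left_le)
  finally show ?thesis unfolding X_def z_def q_def .
qed

section \<open>Exchangeability of the positions\<close>

lemma map_pmf_image_bloom_filter: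
  assumes "L > 0" "inj \<sigma>" "\<sigma> ` {..<L} = {..<L}"
  shows "map_pmf (image \<sigma>) (bloom_filter L k) = bloom_filter L k"
proof (induction k)
  case (Suc k)
  have uniform: "map_pmf \<sigma> (pmf_of_set {..<L}) = pmf_of_set {..<L}"
    using assms map_pmf_of_set_inj[of \<sigma> "{..<L}"] by (simp add: inj_on_subset lessThan_empty_iff)
  have "map_pmf (image \<sigma>) (bloom_filter L (Suc k)) =
     bind_pmf (map_pmf (image \<sigma>) (bloom_filter L k))
       (\<lambda>S. map_pmf (\<lambda>i. insert i S) (map_pmf \<sigma> (pmf_of_set {..<L})))"
    by (simp add: map_bind_pmf bind_map_pmf pmf.map_comp o_def)
  then show ?case by (simp only: Suc uniform bloom_filter.simps)
qed simp

lemma obtain_bij_moving_subset: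
  assumes "finite Z" "T \<subseteq> Z" "T' \<subseteq> Z" "card T = card T'"
  obtains \<sigma> where "bij \<sigma>" "\<And>A. Z \<subseteq> A \<Longrightarrow> \<sigma> ` A = A" "\<sigma> ` T = T'"
proof -
  have "finite T" "finite T'" using assms finite_subset by blast+
  then obtain f where f: "bij_betw f T T'" using finite_same_card_bij[OF _ _ assms(4)] by blast
  have "card (Z - T) = card (Z - T')"
    using assms \<open>finite T\<close> \<open>finite T'\<close> by (simp add: card_Diff_subset)
  then obtain g where g: "bij_betw g (Z - T) (Z - T')"
    using finite_same_card_bij[of "Z - T" "Z - T'"] assms(1) by blast
  define \<sigma> where "\<sigma> x = (if x \<in> T then f x else if x \<in> Z then g x else x)" for x
  have T: "bij_betw \<sigma> T T'"
    using f by (rule bij_betw_cong[THEN iffD1, rotated]) (simp add: \<sigma>_def)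
  have ZT: "bij_betw \<sigma> (Z - T) (Z - T')"
    using g by (rule bij_betw_cong[THEN iffD1, rotated]) (simp add: \<sigma>_def)
  have fixed: "\<sigma> x = x" if "x \<notin> Z" for x
    using that assms(2) by (auto simp: \<sigma>_def)
  have Z: "bij_betw \<sigma> Z Z"
    using bij_betw_combine[OF T ZT] assms(2,3) by (simp add: Un_absorb1)
  moreover have "bij_betw \<sigma> (- Z) (- Z)"
    using fixed by (intro bij_betw_cong[THEN iffD1, OF _ bij_betw_id]) simp
  ultimately have "bij_betw \<sigma> (Z \<union> - Z) (Z \<union> - Z)"
    by (rule bij_betw_combine) simp
  then have "bij \<sigma>" by simp
  moreover have "\<sigma> ` A = A" if "Z \<subseteq> A" for A
  proof -
    have "\<sigma> ` (A - Z) = A - Z" using fixed by simp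
    with Z show ?thesis
      using that by (metis Un_Diff_cancel Un_absorb1 bij_betw_imp_surj_on image_Un)
  qed
  moreover have "\<sigma> ` T = T'" using T by (simp add: bij_betw_def)
  ultimately show ?thesis using that by blast
qed

lemma pmf_restrict_bloom_filter_card_eq:
  assumes "L > 0" "Z \<subseteq> {..<L}" "T \<subseteq> Z" "T' \<subseteq> Z" "card T = card T'"
  shows "pmf (map_pmf (\<lambda>S. S \<inter> Z) (bloom_filter L k)) T = pmf (map_pmf (\<lambda>S. S \<inter> Z) (bloom_filter L k)) T'"
proof -
  define Y where "Y = map_pmf (\<lambda>S. S \<inter> Z) (bloom_filter L k)"
  have "finite Z" using assms(2) finite_subset by blast
  obtain \<sigma> where \<sigma>: "bij \<sigma>" "\<And>A. Z \<subseteq> A \<Longrightarrow> \<sigma> ` A = A" "\<sigma> ` T = T'"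
    using obtain_bij_moving_subset[OF \<open>finite Z\<close> assms(3-5)] by blast
  have "inj \<sigma>" using \<sigma>(1) by (rule bij_is_inj)
  have "\<sigma> ` (S \<inter> Z) = \<sigma> ` S \<inter> Z" for S
    using \<sigma>(2)[of Z] by (simp add: image_Int[OF \<open>inj \<sigma>\<close>])
  then have "map_pmf (image \<sigma>) Y = map_pmf (\<lambda>S. S \<inter> Z) (map_pmf (image \<sigma>) (bloom_filter L k))"
    unfolding Y_def pmf.map_comp o_def by simp
  also have "\<dots> = Y"
    unfolding Y_def using map_pmf_image_bloom_filter[OF assms(1) \<open>inj \<sigma>\<close> \<sigma>(2)[OF assms(2)]] by simp
  finally have "pmf Y T' = pmf (map_pmf (image \<sigma>) Y) (\<sigma> ` T)" using \<sigma>(3) by simp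
  also have "\<dots> = pmf Y T" using \<open>inj \<sigma>\<close> by (intro pmf_map_inj') (simp add: inj_on_image)
  finally show ?thesis unfolding Y_def by simp
qed

section \<open>Entropy of Bloom filters\<close>

lemma real_card_Int_eq: "finite Z \<Longrightarrow> real (card (S \<inter> Z)) = real (card Z) - real (card (Z - S))"
  by (metis Int_commute card_Int_Diff add_diff_cancel_right' of_nat_add)

lemma shannon_entropy_restrict_bloom_filter_le:
  assumes "b > 1" "L \<ge> 2" "k \<ge> 1" "Z \<subseteq> {..<L}"
  shows "shannon_entropy b (map_pmf (\<lambda>S. S \<inter> Z) (bloom_filter L k)) \<le> card Z * h2 b (zero_prob L k)"
proof -
  define q where "q = zero_prob L k"
  define X where "X = bloom_filter L k"
  define z where "z = real (card Z)"
  have q: "0 < q" "q < 1" unfolding q_def using zero_prob_bounds assms(2,3) by auto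
  have "finite Z" using assms(4) finite_subset by blast
  \<comment> \<open>\<open>r\<close> is the law of independent Bernoulli(1 - q) bits on \<open>Z\<close>\<close>
  define r where "r T = (1 - q) ^ card T * q ^ (card Z - card T)" for T :: "nat set"
  have "(\<Sum>T\<in>Pow Z. r T) = (\<Sum>T\<in>Pow Z. (\<Prod>x\<in>T. 1 - q) * (\<Prod>x\<in>Z - T. q))"
    unfolding r_def using \<open>finite Z\<close> by (intro sum.cong refl) (auto simp: card_Diff_subset finite_subset)
  also have "\<dots> = 1" by (subst prod_add[OF \<open>finite Z\<close>, symmetric]) simp
  finally have "shannon_entropy b (map_pmf (\<lambda>S. S \<inter> Z) X)
      \<le> measure_pmf.expectation (map_pmf (\<lambda>S. S \<inter> Z) X) (\<lambda>T. - log b (r T))"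
    using assms(1) \<open>finite Z\<close> q by (intro shannon_entropy_le_cross_entropy[of b "Pow Z"]) (auto simp: r_def)
  also have "\<dots> = measure_pmf.expectation X
      (\<lambda>S. - (z * log b (1 - q)) + (log b (1 - q) - log b q) * real (card (Z - S)))"
    using q assms(1) \<open>finite Z\<close>
    by (auto intro!: Bochner_Integration.integral_cong simp: r_def z_def log_mult log_nat_power
        real_card_Int_eq card_mono of_nat_diff algebra_simps)
  also have "\<dots> = z * h2 b q"
    unfolding X_def using assms(2,4)
    by (subst expectation_affine_card_zeros) (auto simp: z_def q_def h2_def algebra_simps)
  finally show ?thesis unfolding X_def z_def q_def .
qed

lemma shannon_entropy_restrict_bloom_filter_ge:
  assumes "b > 1" "L \<ge> 2" "k \<ge> 1" "Z \<subseteq> {..<L}"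
  defines "q \<equiv> zero_prob L k"
  shows "card Z * h2 b q - log b (real (card Z) + 1) - 1 / (q * (1 - q) * ln b)
     \<le> shannon_entropy b (map_pmf (\<lambda>S. S \<inter> Z) (bloom_filter L k))"
proof -
  define X where "X = bloom_filter L k"
  define z where "z = real (card Z)"
  define W where "W S = real (card (Z - S))" for S
  define a where "a = - log b (z + 1) - z * log b (1 - q)"
  define c where "c = log b (1 - q) - log b q"
  define d where "d = z * q * (1 - q) * ln b"
  have q: "0 < q" "q < 1" unfolding q_def using zero_prob_bounds assms(2,3) by auto
  have "ln b > 0" using assms(1) by simp
  have "finite Z" using assms(4) finite_subset by blast
  have int: "integrable (measure_pmf X) f" for f :: "nat set \<Rightarrow> real"
    unfolding X_def using assms(2) by (intro integrable_measure_pmf_finite finite_set_pmf_bloom_filter) simp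
  have "a + c * W S - (W S - z * q)\<^sup>2 / d \<le> log b (card Z choose card (S \<inter> Z))" for S
    using log_binomial_ge[OF assms(1) card_mono[OF \<open>finite Z\<close> Int_lower2], of "1 - q" S] q
    by (simp add: real_card_Int_eq[OF \<open>finite Z\<close>] z_def W_def a_def c_def d_def
        power2_commute algebra_simps)
  then have "measure_pmf.expectation X (\<lambda>S. a + c * W S - (W S - z * q)\<^sup>2 / d)
      \<le> measure_pmf.expectation (map_pmf (\<lambda>S. S \<inter> Z) X) (\<lambda>T. log b (card Z choose card T))"
    unfolding integral_map_pmf by (intro integral_mono int)
  also have "\<dots> \<le> shannon_entropy b (map_pmf (\<lambda>S. S \<inter> Z) X)"
    unfolding X_def using assms(1,2,4) \<open>finite Z\<close>
    by (intro shannon_entropy_ge_exchangeable pmf_restrict_bloom_filter_card_eq) auto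
  also have "measure_pmf.expectation X (\<lambda>S. a + c * W S - (W S - z * q)\<^sup>2 / d)
      = a + c * (z * q) - measure_pmf.expectation X (\<lambda>S. (W S - z * q)\<^sup>2) / d"
    unfolding Bochner_Integration.integral_diff[OF int int] integral_divide_zero
    unfolding W_def X_def z_def q_def using assms(2,4) by (subst expectation_affine_card_zeros) auto
  also have "a + c * (z * q) = z * h2 b q - log b (z + 1)"
    by (simp add: a_def c_def h2_def algebra_simps)
  finally have "z * h2 b q - log b (z + 1) - measure_pmf.expectation X (\<lambda>S. (W S - z * q)\<^sup>2) / d
      \<le> shannon_entropy b (map_pmf (\<lambda>S. S \<inter> Z) X)" .
  moreover have "measure_pmf.expectation X (\<lambda>S. (W S - z * q)\<^sup>2) / d \<le> 1 / (q * (1 - q) * ln b)"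
  proof (cases "z = 0")
    case False
    have "measure_pmf.expectation X (\<lambda>S. (W S - z * q)\<^sup>2) / d \<le> z / d"
      using expectation_card_zeros_deviation_sq[OF _ assms(4), of k] assms(2) q \<open>ln b > 0\<close>
      by (intro divide_right_mono) (auto simp: X_def W_def z_def q_def d_def)
    then show ?thesis using False by (simp add: d_def)
  qed (use q \<open>ln b > 0\<close> in \<open>simp add: d_def\<close>)
  ultimately show ?thesis unfolding z_def X_def by linarith
qed

lemma shannon_entropy_bloom_filter_bounds:
  assumes "b > 1" "L \<ge> 2" "k \<ge> 1"
  defines "q \<equiv> zero_prob L k"
  shows "L * h2 b q - log b (real L + 1) - 1 / (q * (1 - q) * ln b) \<le> shannon_entropy b (bloom_filter L k)"
    and "shannon_entropy b (bloom_filter L k) \<le> L * h2 b q"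
proof -
  have "map_pmf (\<lambda>S. S \<inter> {..<L}) (bloom_filter L k) = map_pmf id (bloom_filter L k)"
    using set_pmf_bloom_filter[of L k] assms(2) by (intro map_pmf_cong refl) auto
  then show "L * h2 b q - log b (real L + 1) - 1 / (q * (1 - q) * ln b) \<le> shannon_entropy b (bloom_filter L k)"
    and "shannon_entropy b (bloom_filter L k) \<le> L * h2 b q"
    using shannon_entropy_restrict_bloom_filter_ge[OF assms(1-3), of "{..<L}"]
      shannon_entropy_restrict_bloom_filter_le[OF assms(1-3), of "{..<L}"]
    by (simp_all add: q_def)
qed

lemma shannon_entropy_union_bloom_filter:
  assumes "L > 0" "S \<subseteq> {..<L}"
  shows "shannon_entropy b (map_pmf ((\<union>) S) (bloom_filter L k))
    = shannon_entropy b (map_pmf (\<lambda>x. x \<inter> ({..<L} - S)) (bloom_filter L k))"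
proof -
  have "map_pmf ((\<union>) S) (bloom_filter L k)
      = map_pmf ((\<union>) S) (map_pmf (\<lambda>x. x \<inter> ({..<L} - S)) (bloom_filter L k))"
    unfolding pmf.map_comp o_def using set_pmf_bloom_filter[OF assms(1), of k]
    by (intro map_pmf_cong refl) auto
  also have "shannon_entropy b \<dots> = shannon_entropy b (map_pmf (\<lambda>x. x \<inter> ({..<L} - S)) (bloom_filter L k))"
    by (rule shannon_entropy_map_pmf_inj) (auto simp: inj_on_def)
  finally show ?thesis .
qed

lemma cond_entropy_bloom_filter_union_bounds:
  fixes k1 k2 :: nat
  assumes "b > 1" "L \<ge> 2" "k2 \<ge> 1"
  defines "q1 \<equiv> zero_prob L k1" and "q2 \<equiv> zero_prob L k2"
    and "CE \<equiv> cond_entropy b (map_pmf (\<lambda>(x1, x2). (x1, x1 \<union> x2))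
                 (pair_pmf (bloom_filter L k1) (bloom_filter L k2)))"
  shows "L * q1 * h2 b q2 - log b (real L + 1) - 1 / (q2 * (1 - q2) * ln b) \<le> CE"
    and "CE \<le> L * q1 * h2 b q2"
proof -
  define X1 where "X1 = bloom_filter L k1"
  define H where "H S = shannon_entropy b (map_pmf ((\<union>) S) (bloom_filter L k2))" for S
  define zeros where "zeros S = real (card ({..<L} - S))" for S
  define err where "err = log b (real L + 1) + 1 / (q2 * (1 - q2) * ln b)"
  have "L > 0" using assms(2) by simp
  have int: "integrable (measure_pmf X1) f" for f :: "nat set \<Rightarrow> real"
    unfolding X1_def by (intro integrable_measure_pmf_finite finite_set_pmf_bloom_filter \<open>L > 0\<close>)
  have CE: "CE = measure_pmf.expectation X1 H"
    unfolding CE_def H_def X1_def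
    by (intro cond_entropy_map_pair_pmf assms(1) finite_set_pmf_bloom_filter \<open>L > 0\<close>)
  have H: "h2 b q2 * zeros S - err \<le> H S \<and> H S \<le> h2 b q2 * zeros S" if "S \<in> set_pmf X1" for S
  proof -
    have "S \<subseteq> {..<L}" using that set_pmf_bloom_filter[OF \<open>L > 0\<close>] unfolding X1_def by blast
    moreover have "log b (real (card ({..<L} - S)) + 1) \<le> log b (real L + 1)"
      using assms(1) card_mono[of "{..<L}" "{..<L} - S"] by simp
    ultimately show ?thesis
      using shannon_entropy_restrict_bloom_filter_ge[OF assms(1-3), of "{..<L} - S"]
        shannon_entropy_restrict_bloom_filter_le[OF assms(1-3), of "{..<L} - S"]
      by (auto simp: H_def zeros_def err_def q2_def shannon_entropy_union_bloom_filter[OF \<open>L > 0\<close>]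
          mult.commute)
  qed
  have zeros: "measure_pmf.expectation X1 (\<lambda>S. a + h2 b q2 * zeros S) = a + h2 b q2 * (L * q1)" for a
    unfolding X1_def zeros_def q1_def by (subst expectation_affine_card_zeros) (use \<open>L > 0\<close> in auto)
  have "measure_pmf.expectation X1 (\<lambda>S. - err + h2 b q2 * zeros S) \<le> CE"
    unfolding CE using H by (intro integral_mono_AE int) (force simp: AE_measure_pmf_iff)
  then show "L * q1 * h2 b q2 - log b (real L + 1) - 1 / (q2 * (1 - q2) * ln b) \<le> CE"
    unfolding zeros err_def by (simp add: algebra_simps)
  have "CE \<le> measure_pmf.expectation X1 (\<lambda>S. 0 + h2 b q2 * zeros S)"
    unfolding CE using H by (intro integral_mono_AE int) (force simp: AE_measure_pmf_iff)
  then show "CE \<le> L * q1 * h2 b q2" unfolding zeros by (simp add: algebra_simps)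
qed

section \<open>Asymptotics\<close>

lemma tendsto_zero_prob:
  assumes "(\<lambda>L. real (K L) / real L) \<longlonglongrightarrow> \<kappa>"
  shows "(\<lambda>L. zero_prob L (K L)) \<longlonglongrightarrow> exp (- \<kappa>)"
proof -
  have "(\<lambda>L. real L * ln (1 - 1 / real L)) \<longlonglongrightarrow> -1" by real_asymp
  then have "(\<lambda>L. exp (real (K L) / real L * (real L * ln (1 - 1 / real L)))) \<longlonglongrightarrow> exp (\<kappa> * -1)"
    by (intro tendsto_exp tendsto_mult assms)
  moreover have "\<forall>\<^sub>F L in sequentially.
      exp (real (K L) / real L * (real L * ln (1 - 1 / real L))) = zero_prob L (K L)"
    using eventually_ge_at_top[of "2::nat"]
  proof eventually_elim
    case (elim L)
    then have "0 < 1 - 1 / real L" by simp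
    moreover have "real (K L) / real L * (real L * ln (1 - 1 / real L)) = ln ((1 - 1 / real L) ^ K L)"
      using elim calculation by (simp add: ln_realpow)
    ultimately show ?case by (simp add: zero_prob_def)
  qed
  ultimately show ?thesis by (simp add: tendsto_cong)
qed

lemma tendsto_entropy_rate:
  fixes F p q :: "nat \<Rightarrow> real"
  assumes "b > 1" "p \<longlonglongrightarrow> e1" "q \<longlonglongrightarrow> e2" "0 < e2" "e2 < 1"
    and bounds: "\<And>L. L \<ge> N \<Longrightarrow>
      L * p L * h2 b (q L) - log b (real L + 1) - 1 / (q L * (1 - q L) * ln b) \<le> F L
      \<and> F L \<le> L * p L * h2 b (q L)"
  shows "(\<lambda>L. F L / L) \<longlonglongrightarrow> e1 * h2 b e2"
proof (rule tendsto_sandwich)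
  define e where "e L = log b (real L + 1) + 1 / (q L * (1 - q L) * ln b)" for L
  have "(\<lambda>L. ln (real L + 1) / real L) \<longlonglongrightarrow> 0" "(\<lambda>L. 1 / real L) \<longlonglongrightarrow> 0"
    by real_asymp+
  then have "(\<lambda>L. ln (real L + 1) / real L * (1 / ln b) + 1 / (q L * (1 - q L) * ln b) * (1 / real L))
      \<longlonglongrightarrow> 0 * (1 / ln b) + 1 / (e2 * (1 - e2) * ln b) * 0"
    using assms(1-5) by (intro tendsto_intros) auto
  moreover have "(\<lambda>L. e L / L)
      = (\<lambda>L. ln (real L + 1) / real L * (1 / ln b) + 1 / (q L * (1 - q L) * ln b) * (1 / real L))"
    by (simp add: e_def log_def add_divide_distrib fun_eq_iff)
  ultimately have "(\<lambda>L. e L / L) \<longlonglongrightarrow> 0" by simp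
  moreover have "(\<lambda>L. p L * h2 b (q L)) \<longlonglongrightarrow> e1 * h2 b e2"
    using assms(1-5) unfolding h2_def by (intro tendsto_intros) auto
  ultimately show "(\<lambda>L. p L * h2 b (q L) - e L / L) \<longlonglongrightarrow> e1 * h2 b e2"
    and "(\<lambda>L. p L * h2 b (q L)) \<longlonglongrightarrow> e1 * h2 b e2"
    using tendsto_diff by fastforce+
  show "\<forall>\<^sub>F L in sequentially. p L * h2 b (q L) - e L / L \<le> F L / L"
    using eventually_ge_at_top[of "max N 1"]
  proof eventually_elim
    case (elim L)
    then have "(L * p L * h2 b (q L) - e L) / L \<le> F L / L"
      using bounds[of L] by (intro divide_right_mono) (auto simp: e_def)
    then show ?case using elim by (simp add: diff_divide_distrib)
  qed
  show "\<forall>\<^sub>F L in sequentially. F L / L \<le> p L * h2 b (q L)"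
    using eventually_ge_at_top[of "max N 1"]
  proof eventually_elim
    case (elim L)
    then have "F L / L \<le> (L * p L * h2 b (q L)) / L" using bounds[of L] by (intro divide_right_mono) auto
    then show ?case using elim by simp
  qed
qed

lemma tendsto_shannon_entropy_bloom_filter:
  assumes "b > 1" "\<And>L. K L > 0" "\<kappa> > 0" "(\<lambda>L. real (K L) / real L) \<longlonglongrightarrow> \<kappa>"
  shows "(\<lambda>L. shannon_entropy b (bloom_filter L (K L)) / real L) \<longlonglongrightarrow> h2 b (exp (- \<kappa>))"
  using tendsto_entropy_rate[where p="\<lambda>_. 1" and q="\<lambda>L. zero_prob L (K L)" and N=2,
      OF assms(1) tendsto_const tendsto_zero_prob[OF assms(4)]]
    shannon_entropy_bloom_filter_bounds[OF assms(1)] assms(2,3)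
  by (simp add: Suc_le_eq)

lemma tendsto_cond_entropy_bloom_filter_union:
  assumes "b > 1" "\<And>L. K2 L > 0" "\<kappa>2 > 0"
    and "(\<lambda>L. real (K1 L) / real L) \<longlonglongrightarrow> \<kappa>1" "(\<lambda>L. real (K2 L) / real L) \<longlonglongrightarrow> \<kappa>2"
  shows "(\<lambda>L. cond_entropy b (map_pmf (\<lambda>(x1, x2). (x1, x1 \<union> x2))
      (pair_pmf (bloom_filter L (K1 L)) (bloom_filter L (K2 L)))) / real L)
    \<longlonglongrightarrow> exp (- \<kappa>1) * h2 b (exp (- \<kappa>2))"
  using tendsto_entropy_rate[where N=2,
      OF assms(1) tendsto_zero_prob[OF assms(4)] tendsto_zero_prob[OF assms(5)]]
    cond_entropy_bloom_filter_union_bounds[OF assms(1)] assms(2,3)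
  by (simp add: Suc_le_eq)

theorem lemma4:
  fixes b :: real
  assumes "b > 1"
  shows
   "(\<forall>(K :: nat \<Rightarrow> nat) (\<kappa> :: real).
       (\<forall>L. K L > 0) \<and> \<kappa> > 0 \<and> ((\<lambda>L. real (K L) / real L) \<longlonglongrightarrow> \<kappa>) \<longrightarrow>
       ((\<lambda>L. shannon_entropy b (bloom_filter L (K L)) / real L) \<longlonglongrightarrow> h2 b (exp (- \<kappa>))))
    \<and>
    (\<forall>(K1 :: nat \<Rightarrow> nat) (K2 :: nat \<Rightarrow> nat) (\<kappa>1 :: real) (\<kappa>2 :: real).
       (\<forall>L. K1 L > 0) \<and> (\<forall>L. K2 L > 0) \<and> \<kappa>1 > 0 \<and> \<kappa>2 > 0 \<and>
       ((\<lambda>L. real (K1 L) / real L) \<longlonglongrightarrow> \<kappa>1) \<and>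
       ((\<lambda>L. real (K2 L) / real L) \<longlonglongrightarrow> \<kappa>2) \<longrightarrow>
       ((\<lambda>L. cond_entropy b
                (map_pmf (\<lambda>(x1, x2). (x1, x1 \<union> x2))
                   (pair_pmf (bloom_filter L (K1 L)) (bloom_filter L (K2 L)))) / real L)
          \<longlonglongrightarrow> exp (- \<kappa>1) * h2 b (exp (- \<kappa>2))))"
  using tendsto_shannon_entropy_bloom_filter[OF assms] tendsto_cond_entropy_bloom_filter_union[OF assms]
  by blast

end
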